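(* Let $n\ge 2$ and let $A\in\Sigma_{n^2}$. Then the number $\xi_n$ of all matrices $B\in\Sigma_{n^2}$ which are disjoint with $A$ does not depend on $A$ and is equal to $$\xi_n=\sum_{\overline{A}\in\overline{\mathfrak{B}}_n,\ \varepsilon(\overline{A})\ge 2}(-1)^{\varepsilon(\overline{A})}\,|\overline{A}|\prod_{i=0}^{n-2}\left[(n-i)!\right]^{\psi_i(\overline{A})}.$$
   Context: $\Sigma_{n^2}$ is the set of $n^2\times n^2$ binary matrices which, when partitioned into $n^2$ non-intersecting consecutive $n\times n$ blocks, contain exactly one $1$ in each row, each column and each block (S-permutation matrices). Two binary matrices $(a_{ij}),(b_{ij})$ of equal size are disjoint if there are no $i,j$ with $a_{ij}=b_{ij}=1$. $\mathfrak{B}_n$ is the set of $n\times n$ binary matrices. For $A\in\mathfrak{B}_n$, $r_k(A)$ (resp. $c_k(A)$) is the number of rows (resp. columns) of $A$ with exactly $k$ ones, $\psi_k(A)=r_k(A)+c_k(A)$, and $\varepsilon(A)$ is the total number of ones of $A$. $A\sim B$ iff $B$ is obtained from $A$ by permuting rows; $\overline{A}$ denotes the equivalence class of $A$, $|\overline{A}|$ its cardinality, $\overline{\mathfrak{B}}_n=\mathfrak{B}_n/\!\sim$; $\psi_k,\varepsilon$ are defined on classes via any representative. *)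

theory Defs
  imports "HOL-Combinatorics.Permutations"
begin

text \<open>A binary m x m matrix is represented by the set of positions (i,j),
  i,j < m (0-based), of its entries equal to 1.\<close>

definition binmat :: "nat \<Rightarrow> (nat \<times> nat) set set" where
  "binmat m = Pow ({..<m} \<times> {..<m})"

definition row_ones :: "(nat \<times> nat) set \<Rightarrow> nat \<Rightarrow> nat" where
  "row_ones A i = card {j. (i, j) \<in> A}"

definition col_ones :: "(nat \<times> nat) set \<Rightarrow> nat \<Rightarrow> nat" where
  "col_ones A j = card {i. (i, j) \<in> A}"

definition spm :: "nat \<Rightarrow> (nat \<times> nat) set set" where
  "spm n = {A \<in> binmat (n^2).
      (\<forall>i < n^2. row_ones A i = 1) \<and>
      (\<forall>j < n^2. col_ones A j = 1) \<and>
      (\<forall>p < n. \<forall>q < n. card {(i, j) \<in> A. i div n = p \<and> j div n = q} = 1)}"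

definition disjoint_mat :: "(nat \<times> nat) set \<Rightarrow> (nat \<times> nat) set \<Rightarrow> bool" where
  "disjoint_mat A B \<longleftrightarrow> A \<inter> B = {}"

definition r_k :: "nat \<Rightarrow> nat \<Rightarrow> (nat \<times> nat) set \<Rightarrow> nat" where
  "r_k n k A = card {i. i < n \<and> row_ones A i = k}"

definition c_k :: "nat \<Rightarrow> nat \<Rightarrow> (nat \<times> nat) set \<Rightarrow> nat" where
  "c_k n k A = card {j. j < n \<and> col_ones A j = k}"

definition psi :: "nat \<Rightarrow> nat \<Rightarrow> (nat \<times> nat) set \<Rightarrow> nat" where
  "psi n k A = r_k n k A + c_k n k A"

definition eps :: "(nat \<times> nat) set \<Rightarrow> nat" where
  "eps A = card A"

definition row_equiv :: "nat \<Rightarrow> ((nat \<times> nat) set \<times> (nat \<times> nat) set) set" where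
  "row_equiv n = {(A, B). A \<in> binmat n \<and> B \<in> binmat n \<and>
      (\<exists>\<sigma>. \<sigma> permutes {..<n} \<and> B = (\<lambda>(i, j). (\<sigma> i, j)) ` A)}"

definition classes :: "nat \<Rightarrow> (nat \<times> nat) set set set" where
  "classes n = binmat n // row_equiv n"

text \<open>Functions on classes are evaluated at an (arbitrary) representative.\<close>

definition rep :: "(nat \<times> nat) set set \<Rightarrow> (nat \<times> nat) set" where
  "rep C = (SOME A. A \<in> C)"

end

theory Submission
  imports Defs
begin

text \<open>An S-permutation matrix has exactly one 1 in each n x n block. Within a block row the
  row offsets of these 1s form a permutation, and within a block column so do their column
  offsets; conversely any such two families of n permutations give an S-permutation matrix.
  Inclusion-exclusion over the n^2 cells of A turns the count into an alternating sum over the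
  n x n binary matrices M that mark the cells of A which B is required to contain. Prescribing
  the corresponding values of the permutations leaves prod_p (n - r_p)! * prod_q (n - c_q)!
  completions, where r_p and c_q count the marked cells in row p and column q of M; grouped by
  multiplicity this is prod_i ((n - i)!)^psi_i(M). The terms with at most one marked cell
  cancel, and the others depend only on the row-permutation class of M.\<close>

section \<open>Permutations with prescribed values\<close>

lemma card_permutes_fixing:
  assumes "finite S" "D \<subseteq> S"
  shows "card {f. f permutes S \<and> (\<forall>x\<in>D. f x = x)} = fact (card S - card D)"
proof -
  have "{f. f permutes S \<and> (\<forall>x\<in>D. f x = x)} = {f. f permutes (S - D)}"
    using permutes_subset[of _ "S - D" S] permutes_not_in[of _ "S - D"]
    by (auto simp: permutes_def)
  then show ?thesis
    using assms card_permutations[of "S - D"] by (simp add: card_Diff_subset finite_subset)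
qed

lemma permutes_extending_exists:
  assumes "finite S" "D \<subseteq> S" "inj_on g D" "g ` D \<subseteq> S"
  obtains r where "r permutes S" "\<And>x. x \<in> D \<Longrightarrow> r x = g x"
proof -
  have "card (S - D) = card (S - g ` D)"
    using assms by (simp add: card_Diff_subset card_image finite_subset)
  then obtain h where h: "bij_betw h (S - D) (S - g ` D)"
    using finite_same_card_bij assms(1) by blast
  define r where "r x = (if x \<in> D then g x else if x \<in> S then h x else x)" for x
  have "bij_betw r D (g ` D)"
    using inj_on_imp_bij_betw[OF assms(3)] by (rule bij_betw_cong[THEN iffD1, rotated]) (simp add: r_def)
  moreover have "bij_betw r (S - D) (S - g ` D)"
    using h by (rule bij_betw_cong[THEN iffD1, rotated]) (simp add: r_def)
  ultimately have "bij_betw r (D \<union> (S - D)) (g ` D \<union> (S - g ` D))"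
    by (rule bij_betw_combine) blast
  then have "bij_betw r S S"
    using assms(2,4) by (simp add: Un_Diff_cancel Un_absorb1)
  then have "r permutes S"
    by (rule bij_imp_permutes) (use assms(2) in \<open>auto simp: r_def\<close>)
  then show thesis by (rule that) (simp add: r_def)
qed

lemma card_permutes_agreeing:
  assumes "finite S" "D \<subseteq> S" "inj_on g D" "g ` D \<subseteq> S"
  shows "card {f. f permutes S \<and> (\<forall>x\<in>D. f x = g x)} = fact (card S - card D)"
proof -
  obtain r where r: "r permutes S" "\<And>x. x \<in> D \<Longrightarrow> r x = g x"
    using permutes_extending_exists[OF assms] by blast
  let ?fixing = "{h. h permutes S \<and> (\<forall>x\<in>D. h x = x)}"
  have "{f. f permutes S \<and> (\<forall>x\<in>D. f x = g x)} = (\<circ>) r ` ?fixing"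
  proof (intro set_eqI iffI)
    fix f assume f: "f \<in> {f. f permutes S \<and> (\<forall>x\<in>D. f x = g x)}"
    then have "inv r \<circ> f \<in> ?fixing"
      using r permutes_compose[OF _ permutes_inv[OF r(1)]] permutes_inverses(2)[OF r(1)]
      by (auto simp: o_def) (metis)
    moreover have "f = r \<circ> (inv r \<circ> f)"
      using permutes_inverses(1)[OF r(1)] by (auto simp: o_def)
    ultimately show "f \<in> (\<circ>) r ` ?fixing" by blast
  qed (use r permutes_compose in auto)
  moreover have "inj_on ((\<circ>) r) ?fixing"
    using permutes_inj[OF r(1)] by (auto intro!: inj_onI simp: fun_eq_iff inj_eq)
  ultimately show ?thesis
    using card_permutes_fixing[OF assms(1,2)] by (simp add: card_image)
qed

section \<open>Inclusion-exclusion\<close>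

lemma int_card_avoiding:
  assumes "finite K" "finite X"
  shows "int (card {x\<in>X. \<forall>k\<in>K. \<not> P k x}) =
    (\<Sum>M\<in>Pow K. (-1) ^ card M * int (card {x\<in>X. \<forall>k\<in>M. P k x}))"
proof -
  have indicator_avoiding: "of_bool (\<forall>k\<in>K. \<not> P k x) =
      (\<Sum>M\<in>Pow K. (-1) ^ card M * of_bool (\<forall>k\<in>M. P k x) :: int)" for x
  proof -
    have "of_bool (\<forall>k\<in>K. \<not> P k x) = (\<Prod>k\<in>K. 1 - of_bool (P k x) :: int)"
      using assms(1) by (induction K rule: finite_induct) auto
    also have "\<dots> = (\<Sum>M\<in>Pow K. (-1) ^ card M * (\<Prod>k\<in>M. of_bool (P k x)))"
      using prod_diff_conv_sum[OF assms(1), of "\<lambda>_. 1"] by simp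
    also have "\<dots> = (\<Sum>M\<in>Pow K. (-1) ^ card M * of_bool (\<forall>k\<in>M. P k x))"
    proof (intro sum.cong refl)
      fix M assume "M \<in> Pow K"
      then have "finite M" using assms(1) finite_subset by auto
      then show "(-1) ^ card M * (\<Prod>k\<in>M. of_bool (P k x)) =
          (-1) ^ card M * (of_bool (\<forall>k\<in>M. P k x) :: int)"
        by (induction M rule: finite_induct) auto
    qed
    finally show ?thesis .
  qed
  have "int (card {x\<in>X. \<forall>k\<in>K. \<not> P k x}) = (\<Sum>x\<in>X. of_bool (\<forall>k\<in>K. \<not> P k x))"
    using assms(2) by (simp add: Collect_conj_eq Int_commute)
  also have "\<dots> = (\<Sum>M\<in>Pow K. (-1) ^ card M * (\<Sum>x\<in>X. of_bool (\<forall>k\<in>M. P k x)))"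
    by (simp only: indicator_avoiding sum.swap[of _ X] sum_distrib_left)
  also have "\<dots> = (\<Sum>M\<in>Pow K. (-1) ^ card M * int (card {x\<in>X. \<forall>k\<in>M. P k x}))"
    using assms(2) by (simp add: Collect_conj_eq Int_commute)
  finally show ?thesis .
qed

section \<open>S-permutation matrices as pairs of permutation families\<close>

lemma mult_add_eq_mult_add_iff:
  fixes n p p' a a' :: nat
  assumes "a < n" "a' < n"
  shows "p * n + a = p' * n + a' \<longleftrightarrow> p = p' \<and> a = a'"
proof
  assume eq: "p * n + a = p' * n + a'"
  have "(p * n + a) div n = (p' * n + a') div n" "(p * n + a) mod n = (p' * n + a') mod n"
    using eq by simp_all
  then show "p = p' \<and> a = a'" using assms by simp
qed simp

lemma mult_add_less_square:
  fixes n p a :: nat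
  assumes "p < n" "a < n"
  shows "p * n + a < n\<^sup>2"
proof -
  have "p * n + a < (p + 1) * n" using assms(2) by simp
  also have "\<dots> \<le> n * n" using assms(1) by (intro mult_right_mono) auto
  finally show ?thesis by (simp add: power2_eq_square)
qed

lemma div_less_of_less_square:
  fixes n i :: nat
  assumes "i < n\<^sup>2"
  shows "i div n < n"
  using assms by (simp add: power2_eq_square less_mult_imp_div_less)

definition perm_family :: "nat \<Rightarrow> (nat \<Rightarrow> nat \<Rightarrow> nat) set" where
  "perm_family n = (\<Pi>\<^sub>E p\<in>{..<n}. {f. f permutes {..<n}})"

lemma perm_family_permutes: "u \<in> perm_family n \<Longrightarrow> p < n \<Longrightarrow> u p permutes {..<n}"
  by (auto simp: perm_family_def)

lemma perm_family_less: "u \<in> perm_family n \<Longrightarrow> p < n \<Longrightarrow> q < n \<Longrightarrow> u p q < n"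
proof -
  assume "u \<in> perm_family n" "p < n" "q < n"
  then have "u p q \<in> {..<n}"
    using permutes_in_image[OF perm_family_permutes] by simp
  then show ?thesis by simp
qed

lemma perm_family_eqI:
  assumes "u \<in> perm_family n" "u' \<in> perm_family n"
    and "\<And>p q. p < n \<Longrightarrow> q < n \<Longrightarrow> u p q = u' p q"
  shows "u = u'"
proof (intro ext)
  fix p q
  show "u p q = u' p q"
  proof (cases "p < n")
    case True
    show ?thesis
    proof (cases "q < n")
      case False
      then show ?thesis
        using permutes_not_in[OF perm_family_permutes[OF assms(1) True]]
          permutes_not_in[OF perm_family_permutes[OF assms(2) True]] by simp
    qed (use assms(3) True in simp)
  next
    case False
    then show ?thesis
      using PiE_arb[OF assms(1)[unfolded perm_family_def]]
        PiE_arb[OF assms(2)[unfolded perm_family_def]] by simp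
  qed
qed

text \<open>u p q is the offset of the row of the 1 in block (p, q) inside block row p, and
  v q p the offset of its column inside block column q.\<close>

definition block_cell ::
    "nat \<Rightarrow> (nat \<Rightarrow> nat \<Rightarrow> nat) \<Rightarrow> (nat \<Rightarrow> nat \<Rightarrow> nat) \<Rightarrow> nat \<times> nat \<Rightarrow> nat \<times> nat" where
  "block_cell n u v = (\<lambda>(p, q). (p * n + u p q, q * n + v q p))"

definition spm_of :: "nat \<Rightarrow> (nat \<Rightarrow> nat \<Rightarrow> nat) \<Rightarrow> (nat \<Rightarrow> nat \<Rightarrow> nat) \<Rightarrow> (nat \<times> nat) set" where
  "spm_of n u v = block_cell n u v ` ({..<n} \<times> {..<n})"

lemma block_cell_eq_iff:
  assumes "u \<in> perm_family n" "v \<in> perm_family n" "u' \<in> perm_family n" "v' \<in> perm_family n"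
    and "p < n" "q < n" "p' < n" "q' < n"
  shows "block_cell n u v (p, q) = block_cell n u' v' (p', q') \<longleftrightarrow>
    p = p' \<and> q = q' \<and> u p q = u' p q \<and> v q p = v' q p"
proof -
  have "u p q < n" "u' p' q' < n" "v q p < n" "v' q' p' < n"
    using assms by (simp_all add: perm_family_less)
  then have "block_cell n u v (p, q) = block_cell n u' v' (p', q') \<longleftrightarrow>
      (p = p' \<and> u p q = u' p' q') \<and> (q = q' \<and> v q p = v' q' p')"
    by (simp add: block_cell_def mult_add_eq_mult_add_iff)
  then show ?thesis by auto
qed

lemma block_cell_div:
  assumes "u \<in> perm_family n" "v \<in> perm_family n" "p < n" "q < n"
  shows "fst (block_cell n u v (p, q)) div n = p" "snd (block_cell n u v (p, q)) div n = q"
  using assms by (simp_all add: block_cell_def perm_family_less)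

lemma block_cell_mem_spm_of_iff:
  assumes "u \<in> perm_family n" "v \<in> perm_family n" "u' \<in> perm_family n" "v' \<in> perm_family n"
    and "p < n" "q < n"
  shows "block_cell n u v (p, q) \<in> spm_of n u' v' \<longleftrightarrow> u' p q = u p q \<and> v' q p = v q p"
proof
  assume "block_cell n u v (p, q) \<in> spm_of n u' v'"
  then obtain p' q' where "p' < n" "q' < n" "block_cell n u v (p, q) = block_cell n u' v' (p', q')"
    by (auto simp: spm_of_def)
  then show "u' p q = u p q \<and> v' q p = v q p"
    using block_cell_eq_iff[OF assms] by auto
next
  assume "u' p q = u p q \<and> v' q p = v q p"
  then have "block_cell n u v (p, q) = block_cell n u' v' (p, q)"
    by (simp add: block_cell_def)
  then show "block_cell n u v (p, q) \<in> spm_of n u' v'"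
    using assms(5,6) by (auto simp: spm_of_def)
qed

lemma converse_spm_of: "(spm_of n u v)\<inverse> = spm_of n v u"
  unfolding spm_of_def block_cell_def by auto

lemma row_ones_spm_of:
  assumes u: "u \<in> perm_family n" and v: "v \<in> perm_family n" and i: "i < n\<^sup>2"
  shows "row_ones (spm_of n u v) i = 1"
proof -
  define p a where "p = i div n" and "a = i mod n"
  have pa: "p < n" "a < n" "i = p * n + a"
    using div_less_of_less_square[OF i] i by (auto simp: p_def a_def intro: pos_mod_bound)
  have up: "u p permutes {..<n}" by (rule perm_family_permutes[OF u pa(1)])
  define q where "q = inv (u p) a"
  have q: "q < n" "u p q = a"
    using permutes_in_image[OF permutes_inv[OF up]] permutes_inverses(1)[OF up] pa(2)
    by (auto simp: q_def)
  have "{j. (i, j) \<in> spm_of n u v} = {q * n + v q p}"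
  proof (intro set_eqI iffI)
    fix j assume "j \<in> {j. (i, j) \<in> spm_of n u v}"
    then obtain p' q' where "p' < n" "q' < n" "i = p' * n + u p' q'" "j = q' * n + v q' p'"
      by (auto simp: spm_of_def block_cell_def)
    moreover from this have "p' = p" "u p q' = a"
      using pa mult_add_eq_mult_add_iff[of "u p' q'" n a p' p] perm_family_less[OF u] by auto
    ultimately show "j \<in> {q * n + v q p}"
      using permutes_inj[OF up] q(2) by (auto dest: injD)
  qed (use pa q in \<open>force simp: spm_of_def block_cell_def\<close>)
  then show ?thesis by (simp add: row_ones_def)
qed

lemma col_ones_eq_row_ones_converse: "col_ones A j = row_ones (A\<inverse>) j"
  by (simp add: col_ones_def row_ones_def)

lemma spm_of_in_spm:
  assumes u: "u \<in> perm_family n" and v: "v \<in> perm_family n"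
  shows "spm_of n u v \<in> spm n"
proof -
  have "block_cell n u v (p, q) \<in> {..<n\<^sup>2} \<times> {..<n\<^sup>2}" if "p < n" "q < n" for p q
    using that perm_family_less[OF u] perm_family_less[OF v]
    by (simp add: block_cell_def mult_add_less_square)
  then have "spm_of n u v \<in> binmat (n\<^sup>2)"
    unfolding binmat_def spm_of_def by (simp add: image_subset_iff)
  moreover have "col_ones (spm_of n u v) j = 1" if "j < n\<^sup>2" for j
    unfolding col_ones_eq_row_ones_converse converse_spm_of using row_ones_spm_of[OF v u that] .
  moreover have "card {(i, j) \<in> spm_of n u v. i div n = p \<and> j div n = q} = 1"
    if "p < n" "q < n" for p q
  proof -
    have "{(i, j) \<in> spm_of n u v. i div n = p \<and> j div n = q} = {block_cell n u v (p, q)}"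
    proof (intro set_eqI iffI)
      fix x assume "x \<in> {(i, j) \<in> spm_of n u v. i div n = p \<and> j div n = q}"
      then have x: "x \<in> spm_of n u v" "fst x div n = p" "snd x div n = q"
        by (auto simp: case_prod_beta)
      then obtain p' q' where "p' < n" "q' < n" "x = block_cell n u v (p', q')"
        by (auto simp: spm_of_def)
      with x show "x \<in> {block_cell n u v (p, q)}"
        using block_cell_div[OF u v] by auto
    next
      fix x assume "x \<in> {block_cell n u v (p, q)}"
      then have "x \<in> spm_of n u v" "fst x div n = p" "snd x div n = q"
        using that block_cell_div[OF u v] by (auto simp: spm_of_def)
      then show "x \<in> {(i, j) \<in> spm_of n u v. i div n = p \<and> j div n = q}"
        by (auto simp: case_prod_beta)
    qed
    then show ?thesis by simp
  qed
  ultimately show ?thesis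
    using row_ones_spm_of[OF u v] by (simp add: spm_def)
qed

lemma inj_on_spm_of:
  "inj_on (\<lambda>(u, v). spm_of n u v) (perm_family n \<times> perm_family n)"
proof (intro inj_onI, clarify)
  fix u v u' v'
  assume fam: "u \<in> perm_family n" "v \<in> perm_family n" "u' \<in> perm_family n" "v' \<in> perm_family n"
    and eq: "spm_of n u v = spm_of n u' v'"
  have "u' p q = u p q \<and> v' q p = v q p" if "p < n" "q < n" for p q
    using block_cell_mem_spm_of_iff[OF fam that] eq that by (auto simp: spm_of_def)
  then show "u = u' \<and> v = v'"
    using perm_family_eqI[OF fam(1,3)] perm_family_eqI[OF fam(2,4)] by metis
qed

lemma converse_in_spm:
  assumes "B \<in> spm n"
  shows "B\<inverse> \<in> spm n"
proof -
  have "card {(i, j) \<in> B\<inverse>. i div n = p \<and> j div n = q} = 1" if "p < n" "q < n" for p q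
  proof -
    have "{(i, j) \<in> B\<inverse>. i div n = p \<and> j div n = q} =
        prod.swap ` {(i, j) \<in> B. i div n = q \<and> j div n = p}"
      by auto
    then show ?thesis
      using assms that by (simp add: spm_def card_image)
  qed
  moreover have "B\<inverse> \<in> binmat (n\<^sup>2)"
    using assms by (auto simp: spm_def binmat_def)
  ultimately show ?thesis
    using assms by (simp add: spm_def col_ones_eq_row_ones_converse)
qed

lemma spm_row_unique:
  assumes "B \<in> spm n" "(i, j) \<in> B" "(i, j') \<in> B"
  shows "j = j'"
proof -
  have "i < n\<^sup>2" using assms(1,2) by (auto simp: spm_def binmat_def)
  then have "card {j. (i, j) \<in> B} = 1" using assms(1) by (simp add: spm_def row_ones_def)
  then obtain j0 where "{j. (i, j) \<in> B} = {j0}" by (rule card_1_singletonE)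
  then have "j \<in> {j0}" "j' \<in> {j0}" using assms(2,3) by blast+
  then show ?thesis by simp
qed

lemma spm_block_unique:
  assumes "B \<in> spm n" "p < n" "q < n"
  shows "\<exists>!x. x \<in> B \<and> fst x div n = p \<and> snd x div n = q"
proof -
  have "{x \<in> B. fst x div n = p \<and> snd x div n = q} = {(i, j) \<in> B. i div n = p \<and> j div n = q}"
    by auto
  then have "card {x \<in> B. fst x div n = p \<and> snd x div n = q} = 1"
    using assms by (simp add: spm_def)
  then obtain x0 where "{x \<in> B. fst x div n = p \<and> snd x div n = q} = {x0}"
    by (rule card_1_singletonE)
  then show ?thesis by (metis (mono_tags, lifting) mem_Collect_eq singleton_iff)
qed

definition block_entry :: "nat \<Rightarrow> (nat \<times> nat) set \<Rightarrow> nat \<Rightarrow> nat \<Rightarrow> nat \<times> nat" where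
  "block_entry n B p q = (THE x. x \<in> B \<and> fst x div n = p \<and> snd x div n = q)"

lemma block_entry_in_block:
  assumes "B \<in> spm n" "p < n" "q < n"
  shows "block_entry n B p q \<in> B" "fst (block_entry n B p q) div n = p"
    "snd (block_entry n B p q) div n = q"
  using theI'[OF spm_block_unique[OF assms]] by (simp_all add: block_entry_def)

lemma block_entry_eqI:
  assumes "B \<in> spm n" "x \<in> B" "fst x div n = p" "snd x div n = q"
  shows "block_entry n B p q = x"
proof -
  have "fst x < n\<^sup>2" "snd x < n\<^sup>2" using assms(1,2) by (auto simp: spm_def binmat_def)
  then have "p < n" "q < n" using assms(3,4) div_less_of_less_square by auto
  then show ?thesis
    unfolding block_entry_def using spm_block_unique[OF assms(1)] assms(2-4)
    by (intro the1_equality) auto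
qed

definition row_offsets :: "nat \<Rightarrow> (nat \<times> nat) set \<Rightarrow> nat \<Rightarrow> nat \<Rightarrow> nat" where
  "row_offsets n B = (\<lambda>p\<in>{..<n}. \<lambda>q. if q < n then fst (block_entry n B p q) mod n else q)"

lemma row_offsets_in_perm_family:
  assumes B: "B \<in> spm n"
  shows "row_offsets n B \<in> perm_family n"
  unfolding perm_family_def
proof (rule PiE_I)
  fix p assume "p \<in> {..<n}"
  then have p: "p < n" by simp
  let ?f = "row_offsets n B p"
  have maps: "?f ` {..<n} \<subseteq> {..<n}"
    using p by (auto simp: row_offsets_def)
  have "inj_on ?f {..<n}"
  proof (rule inj_onI)
    fix q q' assume q: "q \<in> {..<n}" "q' \<in> {..<n}" and eq: "?f q = ?f q'"
    let ?x = "block_entry n B p q" and ?x' = "block_entry n B p q'"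
    have q': "q < n" "q' < n" using q by simp_all
    have in_B: "?x \<in> B" "?x' \<in> B" using block_entry_in_block(1)[OF B p] q' by simp_all
    have "fst ?x = fst ?x div n * n + fst ?x mod n" by simp
    also have "\<dots> = fst ?x' div n * n + fst ?x' mod n"
      using eq q' block_entry_in_block(2)[OF B p] by (simp add: row_offsets_def p)
    also have "\<dots> = fst ?x'" by simp
    finally have "snd ?x = snd ?x'"
      using spm_row_unique[OF B, of "fst ?x" "snd ?x" "snd ?x'"] in_B by (metis prod.collapse)
    then show "q = q'"
      using block_entry_in_block(3)[OF B p] q' by metis
  qed
  then have "bij_betw ?f {..<n} {..<n}"
    using endo_inj_surj[OF _ maps] by (simp add: bij_betw_def)
  then have "?f permutes {..<n}"
    by (rule bij_imp_permutes) (use p in \<open>simp add: row_offsets_def\<close>)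
  then show "?f \<in> {f. f permutes {..<n}}" by simp
qed (simp add: row_offsets_def)

lemma block_cell_row_offsets:
  assumes B: "B \<in> spm n" and "p < n" "q < n"
  shows "block_cell n (row_offsets n B) (row_offsets n (B\<inverse>)) (p, q) = block_entry n B p q"
proof -
  let ?x = "block_entry n B p q"
  have "block_entry n (B\<inverse>) q p = prod.swap ?x"
    using block_entry_in_block[OF B assms(2,3)]
    by (intro block_entry_eqI[OF converse_in_spm[OF B]]) (auto simp: prod.swap_def)
  then show ?thesis
    using assms block_entry_in_block(2,3)[OF B assms(2,3)]
    by (simp add: block_cell_def row_offsets_def prod_eq_iff) (metis div_mult_mod_eq)
qed

lemma spm_eq_spm_of_row_offsets:
  assumes B: "B \<in> spm n"
  shows "B = spm_of n (row_offsets n B) (row_offsets n (B\<inverse>))"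
proof -
  have "spm_of n (row_offsets n B) (row_offsets n (B\<inverse>)) =
      (\<lambda>(p, q). block_entry n B p q) ` ({..<n} \<times> {..<n})"
    unfolding spm_of_def using block_cell_row_offsets[OF B] by (intro image_cong) auto
  also have "\<dots> = B"
  proof (intro equalityI subsetI)
    fix x assume "x \<in> B"
    moreover have "fst x < n\<^sup>2" "snd x < n\<^sup>2"
      using B \<open>x \<in> B\<close> by (auto simp: spm_def binmat_def)
    ultimately show "x \<in> (\<lambda>(p, q). block_entry n B p q) ` ({..<n} \<times> {..<n})"
      using block_entry_eqI[OF B] div_less_of_less_square
      by (intro rev_image_eqI[of "(fst x div n, snd x div n)"]) auto
  qed (use block_entry_in_block(1)[OF B] in auto)
  finally show ?thesis ..
qed

lemma spm_eq_image_spm_of: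
  "spm n = (\<lambda>(u, v). spm_of n u v) ` (perm_family n \<times> perm_family n)"
proof (intro equalityI subsetI)
  fix B assume B: "B \<in> spm n"
  have "(row_offsets n B, row_offsets n (B\<inverse>)) \<in> perm_family n \<times> perm_family n"
    using row_offsets_in_perm_family B converse_in_spm by blast
  then show "B \<in> (\<lambda>(u, v). spm_of n u v) ` (perm_family n \<times> perm_family n)"
    using spm_eq_spm_of_row_offsets[OF B] by (auto intro: rev_image_eqI)
qed (auto intro: spm_of_in_spm)

section \<open>Counting S-permutation matrices through prescribed cells\<close>

lemma card_perm_family_agreeing:
  assumes w: "w \<in> perm_family n" and M: "M \<subseteq> {..<n} \<times> {..<n}"
  shows "card {u \<in> perm_family n. \<forall>(p, q)\<in>M. u p q = w p q} = (\<Prod>p<n. fact (n - row_ones M p))"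
proof -
  let ?agree = "\<lambda>p. {f. f permutes {..<n} \<and> (\<forall>q\<in>{q. (p, q) \<in> M}. f q = w p q)}"
  have "{u \<in> perm_family n. \<forall>(p, q)\<in>M. u p q = w p q} = (\<Pi>\<^sub>E p\<in>{..<n}. ?agree p)"
    using M by (auto simp: perm_family_def PiE_iff extensional_def)
  moreover have "card (?agree p) = fact (n - row_ones M p)" if p: "p < n" for p
  proof -
    have "{q. (p, q) \<in> M} \<subseteq> {..<n}" using M by auto
    moreover have "inj_on (w p) {q. (p, q) \<in> M}" "w p ` {q. (p, q) \<in> M} \<subseteq> {..<n}"
      using perm_family_permutes[OF w p] calculation
      by (auto intro: inj_on_subset permutes_inj_on dest: permutes_in_image)
    ultimately show ?thesis
      using card_permutes_agreeing[of "{..<n}" "{q. (p, q) \<in> M}" "w p"] by (simp add: row_ones_def)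
  qed
  ultimately show ?thesis by (simp add: card_PiE)
qed

definition completion_count :: "nat \<Rightarrow> (nat \<times> nat) set \<Rightarrow> nat" where
  "completion_count n M = (\<Prod>p<n. fact (n - row_ones M p)) * (\<Prod>q<n. fact (n - col_ones M q))"

lemma card_spm_containing_cells:
  assumes u: "u \<in> perm_family n" and v: "v \<in> perm_family n" and M: "M \<subseteq> {..<n} \<times> {..<n}"
  shows "card {B \<in> spm n. block_cell n u v ` M \<subseteq> B} = completion_count n M"
proof -
  let ?U = "{u' \<in> perm_family n. \<forall>(p, q)\<in>M. u' p q = u p q}"
  let ?V = "{v' \<in> perm_family n. \<forall>(q, p)\<in>M\<inverse>. v' q p = v q p}"
  have contains_iff: "block_cell n u v ` M \<subseteq> spm_of n u' v' \<longleftrightarrow> u' \<in> ?U \<and> v' \<in> ?V"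
    if fam: "u' \<in> perm_family n" "v' \<in> perm_family n" for u' v'
  proof -
    have "block_cell n u v ` M \<subseteq> spm_of n u' v' \<longleftrightarrow>
        (\<forall>(p, q)\<in>M. block_cell n u v (p, q) \<in> spm_of n u' v')"
      by (auto simp: image_subset_iff)
    also have "\<dots> \<longleftrightarrow> (\<forall>(p, q)\<in>M. u' p q = u p q \<and> v' q p = v q p)"
      using block_cell_mem_spm_of_iff[OF u v fam] M by blast
    finally show ?thesis using fam by auto
  qed
  have "{B \<in> spm n. block_cell n u v ` M \<subseteq> B} = (\<lambda>(u', v'). spm_of n u' v') ` (?U \<times> ?V)"
  proof (intro equalityI subsetI)
    fix B assume "B \<in> {B \<in> spm n. block_cell n u v ` M \<subseteq> B}"
    then obtain u' v' where "u' \<in> perm_family n" "v' \<in> perm_family n" "B = spm_of n u' v'"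
      "block_cell n u v ` M \<subseteq> B"
      unfolding spm_eq_image_spm_of by auto
    then show "B \<in> (\<lambda>(u', v'). spm_of n u' v') ` (?U \<times> ?V)"
      using contains_iff by auto
  next
    fix B assume "B \<in> (\<lambda>(u', v'). spm_of n u' v') ` (?U \<times> ?V)"
    then obtain u' v' where "u' \<in> ?U" "v' \<in> ?V" "B = spm_of n u' v'" by auto
    then show "B \<in> {B \<in> spm n. block_cell n u v ` M \<subseteq> B}"
      using contains_iff spm_of_in_spm by auto
  qed
  moreover have "inj_on (\<lambda>(u', v'). spm_of n u' v') (?U \<times> ?V)"
    by (rule inj_on_subset[OF inj_on_spm_of]) auto
  moreover have "M\<inverse> \<subseteq> {..<n} \<times> {..<n}" using M by auto
  ultimately show ?thesis
    using card_perm_family_agreeing[OF u M] card_perm_family_agreeing[OF v, of "M\<inverse>"]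
    by (simp add: card_image card_cartesian_product completion_count_def
        col_ones_eq_row_ones_converse)
qed

lemma finite_binmat: "finite (binmat n)"
  by (simp add: binmat_def)

lemma finite_spm: "finite (spm n)"
  by (rule finite_subset[of _ "binmat (n\<^sup>2)"]) (auto simp: spm_def finite_binmat)

lemma int_card_spm_disjoint:
  assumes "A \<in> spm n"
  shows "int (card {B \<in> spm n. disjoint_mat A B}) =
    (\<Sum>M\<in>binmat n. (-1) ^ card M * int (completion_count n M))"
proof -
  let ?K = "{..<n} \<times> {..<n}"
  obtain u v where fam: "u \<in> perm_family n" "v \<in> perm_family n" and A: "A = spm_of n u v"
    using assms unfolding spm_eq_image_spm_of by auto
  have "{B \<in> spm n. disjoint_mat A B} = {B \<in> spm n. \<forall>k\<in>?K. block_cell n u v k \<notin> B}"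
    unfolding disjoint_mat_def A spm_of_def by blast
  then have "int (card {B \<in> spm n. disjoint_mat A B}) =
      (\<Sum>M\<in>Pow ?K. (-1) ^ card M * int (card {B \<in> spm n. \<forall>k\<in>M. block_cell n u v k \<in> B}))"
    using int_card_avoiding[of ?K "spm n" "\<lambda>k B. block_cell n u v k \<in> B"] finite_spm by simp
  also have "\<dots> = (\<Sum>M\<in>binmat n. (-1) ^ card M * int (completion_count n M))"
    unfolding binmat_def
  proof (intro sum.cong refl)
    fix M assume "M \<in> Pow ?K"
    then have "card {B \<in> spm n. \<forall>k\<in>M. block_cell n u v k \<in> B} = completion_count n M"
      using card_spm_containing_cells[OF fam] by (simp add: image_subset_iff)
    then show "(-1) ^ card M * int (card {B \<in> spm n. \<forall>k\<in>M. block_cell n u v k \<in> B}) =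
        (-1) ^ card M * int (completion_count n M)" by simp
  qed
  finally show ?thesis .
qed

section \<open>Evaluating the alternating sum\<close>

lemma prod_comp_eq_prod_power_card:
  fixes g :: "'b \<Rightarrow> 'c::comm_monoid_mult"
  assumes "finite S" "finite T" "h ` S \<subseteq> T"
  shows "(\<Prod>x\<in>S. g (h x)) = (\<Prod>k\<in>T. g k ^ card {x \<in> S. h x = k})"
proof -
  have "(\<Prod>x\<in>S. g (h x)) = (\<Prod>k\<in>T. \<Prod>x\<in>{x \<in> S. h x = k}. g (h x))"
    by (rule prod.group[symmetric, OF assms])
  also have "\<dots> = (\<Prod>k\<in>T. g k ^ card {x \<in> S. h x = k})"
    by (intro prod.cong refl) simp
  finally show ?thesis .
qed

lemma row_ones_le: "M \<in> binmat n \<Longrightarrow> row_ones M p \<le> n"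
  unfolding row_ones_def binmat_def by (rule card_mono[of "{..<n}", simplified]) auto

lemma completion_count_eq_prod_psi:
  assumes n: "n \<ge> 2" and M: "M \<in> binmat n"
  shows "completion_count n M = (\<Prod>i = 0..n - 2. fact (n - i) ^ psi n i M)"
proof -
  have converse_M: "M\<inverse> \<in> binmat n" using M by (auto simp: binmat_def)
  have rows: "(\<Prod>p<n. fact (n - row_ones M p)) = (\<Prod>k = 0..n. fact (n - k) ^ r_k n k M :: nat)"
    unfolding r_k_def using row_ones_le[OF M]
    by (subst prod_comp_eq_prod_power_card[where T = "{0..n}"]) auto
  have cols: "(\<Prod>q<n. fact (n - col_ones M q)) = (\<Prod>k = 0..n. fact (n - k) ^ c_k n k M :: nat)"
    unfolding c_k_def col_ones_eq_row_ones_converse using row_ones_le[OF converse_M]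
    by (subst prod_comp_eq_prod_power_card[where T = "{0..n}"]) auto
  have "completion_count n M = (\<Prod>k = 0..n. fact (n - k) ^ psi n k M)"
    unfolding completion_count_def rows cols psi_def power_add prod.distrib ..
  also have "\<dots> = (\<Prod>k = 0..n - 2. fact (n - k) ^ psi n k M)"
  proof (intro prod.mono_neutral_right)
    show "\<forall>k\<in>{0..n} - {0..n - 2}. fact (n - k) ^ psi n k M = (1::nat)"
    proof
      fix k assume "k \<in> {0..n} - {0..n - 2}"
      then have "n - k = 0 \<or> n - k = 1" using n by auto
      then show "fact (n - k) ^ psi n k M = (1::nat)" by auto
    qed
  qed auto
  finally show ?thesis .
qed

lemma completion_count_empty: "completion_count n {} = fact n ^ n * fact n ^ n"
  by (simp add: completion_count_def row_ones_def col_ones_def)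

lemma prod_fact_single_row:
  assumes "p < n"
  shows "(\<Prod>p'<n. fact (n - (if p' = p then 1 else 0))) = fact (n - 1) * fact n ^ (n - 1)"
proof -
  have "(\<Prod>p'<n. fact (n - (if p' = p then 1 else 0))) =
      fact (n - 1) * (\<Prod>p'\<in>{..<n} - {p}. fact (n - (if p' = p then 1 else 0)))"
    using assms by (simp add: prod.remove)
  also have "(\<Prod>p'\<in>{..<n} - {p}. fact (n - (if p' = p then 1 else 0))) = fact n ^ (n - 1)"
    using assms by simp
  finally show ?thesis .
qed

lemma completion_count_singleton:
  assumes "p < n" "q < n"
  shows "completion_count n {(p, q)} = (fact (n - 1) * fact n ^ (n - 1)) ^ 2"
proof -
  have "row_ones {(p, q)} p' = (if p' = p then 1 else 0)" "col_ones {(p, q)} q' = (if q' = q then 1 else 0)"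
    for p' q' by (auto simp: row_ones_def col_ones_def)
  then show ?thesis
    by (simp add: completion_count_def prod_fact_single_row[OF assms(1)]
        prod_fact_single_row[OF assms(2)] power2_eq_square)
qed

text \<open>The empty matrix contributes n!^(2n) and each of the n^2 singletons
  -((n-1)! n!^(n-1))^2 = -(n!^n / n)^2.\<close>

lemma sum_binmat_card_less_2:
  assumes "n \<ge> 1"
  shows "(\<Sum>M\<in>{M \<in> binmat n. card M < 2}. (-1) ^ card M * int (completion_count n M)) = 0"
proof -
  let ?K = "{..<n} \<times> {..<n}"
  define X :: nat where "X = fact (n - 1) * fact n ^ (n - 1)"
  have "{M \<in> binmat n. card M < 2} = insert {} ((\<lambda>k. {k}) ` ?K)"
  proof (intro equalityI subsetI)
    fix M assume M: "M \<in> {M \<in> binmat n. card M < 2}"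
    then have "finite M" "M \<subseteq> ?K" "card M = 0 \<or> card M = 1"
      by (auto simp: binmat_def intro: finite_subset)
    then show "M \<in> insert {} ((\<lambda>k. {k}) ` ?K)"
      by (auto simp: card_1_singleton_iff)
  qed (auto simp: binmat_def)
  moreover have "{} \<notin> (\<lambda>k. {k}) ` ?K" "inj_on (\<lambda>k. {k}) ?K" by auto
  ultimately have "(\<Sum>M\<in>{M \<in> binmat n. card M < 2}. (-1) ^ card M * int (completion_count n M)) =
      int (completion_count n {}) - (\<Sum>k\<in>?K. int (completion_count n {k}))"
    by (simp add: sum.reindex sum_negf)
  also have "(\<Sum>k\<in>?K. int (completion_count n {k})) = (\<Sum>k\<in>?K. int (X ^ 2))"
    by (intro sum.cong refl) (auto simp: completion_count_singleton X_def)
  also have "\<dots> = int (n * n * X ^ 2)"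
    by (simp add: card_cartesian_product)
  also have "n * X = fact n ^ n"
    using assms by (simp add: X_def fact_reduce[of n] mult.assoc power_eq_if)
  then have "n * n * X ^ 2 = completion_count n {}"
    by (simp add: completion_count_empty power2_eq_square algebra_simps)
  finally show ?thesis by simp
qed

section \<open>Row-permutation classes\<close>

definition permute_rows :: "(nat \<Rightarrow> nat) \<Rightarrow> (nat \<times> nat) set \<Rightarrow> (nat \<times> nat) set" where
  "permute_rows \<sigma> A = (\<lambda>(i, j). (\<sigma> i, j)) ` A"

lemma row_equiv_iff:
  "(A, B) \<in> row_equiv n \<longleftrightarrow>
    A \<in> binmat n \<and> B \<in> binmat n \<and> (\<exists>\<sigma>. \<sigma> permutes {..<n} \<and> B = permute_rows \<sigma> A)"
  by (simp add: row_equiv_def permute_rows_def)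

lemma permute_rows_id: "permute_rows id A = A"
  by (simp add: permute_rows_def case_prod_beta)

lemma permute_rows_comp: "permute_rows \<tau> (permute_rows \<sigma> A) = permute_rows (\<tau> \<circ> \<sigma>) A"
  by (simp add: permute_rows_def image_image case_prod_beta)

lemma mem_permute_rows_iff: "inj \<sigma> \<Longrightarrow> (\<sigma> i, j) \<in> permute_rows \<sigma> A \<longleftrightarrow> (i, j) \<in> A"
  by (auto simp: permute_rows_def inj_eq)

lemma equiv_row_equiv: "equiv (binmat n) (row_equiv n)"
proof (rule equivI)
  show "refl_on (binmat n) (row_equiv n)"
  proof (rule refl_onI)
    fix A assume "A \<in> binmat n"
    then show "(A, A) \<in> row_equiv n"
      using permutes_id permute_rows_id unfolding row_equiv_iff by metis
  qed
  show "sym (row_equiv n)"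
  proof (rule symI)
    fix A B assume "(A, B) \<in> row_equiv n"
    then obtain \<sigma> where "A \<in> binmat n" "B \<in> binmat n" "\<sigma> permutes {..<n}" "B = permute_rows \<sigma> A"
      by (auto simp: row_equiv_iff)
    moreover from this have "A = permute_rows (inv \<sigma>) B"
      by (simp add: permute_rows_comp permutes_inv_o(2) permute_rows_id)
    ultimately show "(B, A) \<in> row_equiv n"
      unfolding row_equiv_iff using permutes_inv by blast
  qed
  show "trans (row_equiv n)"
  proof (rule transI)
    fix A B C assume "(A, B) \<in> row_equiv n" "(B, C) \<in> row_equiv n"
    then obtain \<sigma> \<tau> where "A \<in> binmat n" "C \<in> binmat n" "\<sigma> permutes {..<n}" "\<tau> permutes {..<n}"
      "C = permute_rows \<tau> (permute_rows \<sigma> A)"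
      unfolding row_equiv_iff by blast
    then have "A \<in> binmat n" "C \<in> binmat n" "\<tau> \<circ> \<sigma> permutes {..<n}"
      "C = permute_rows (\<tau> \<circ> \<sigma>) A"
      by (simp_all add: permute_rows_comp permutes_compose)
    then show "(A, C) \<in> row_equiv n"
      unfolding row_equiv_iff by blast
  qed
qed (auto simp: row_equiv_def)

lemma card_permute_rows:
  assumes "inj \<sigma>"
  shows "card (permute_rows \<sigma> A) = card A"
proof -
  have "permute_rows \<sigma> A = map_prod \<sigma> id ` A"
    by (simp add: permute_rows_def map_prod_def id_def)
  moreover have "inj (map_prod \<sigma> id)"
    using map_prod_inj_on[OF assms inj_on_id[of UNIV]] by simp
  ultimately show ?thesis
    by (metis card_image inj_on_subset subset_UNIV)
qed

lemma row_ones_permute_rows: "inj \<sigma> \<Longrightarrow> row_ones (permute_rows \<sigma> A) (\<sigma> i) = row_ones A i"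
  unfolding row_ones_def by (simp add: mem_permute_rows_iff)

lemma col_ones_permute_rows: "inj \<sigma> \<Longrightarrow> col_ones (permute_rows \<sigma> A) j = col_ones A j"
proof -
  assume inj: "inj \<sigma>"
  have "{i. (i, j) \<in> permute_rows \<sigma> A} = \<sigma> ` {i. (i, j) \<in> A}"
    unfolding permute_rows_def by force
  then show ?thesis
    using inj by (simp add: col_ones_def card_image inj_on_subset)
qed

lemma r_k_permute_rows:
  assumes "\<sigma> permutes {..<n}"
  shows "r_k n k (permute_rows \<sigma> A) = r_k n k A"
proof -
  have inj: "inj \<sigma>" using assms by (rule permutes_inj)
  have "{i. i < n \<and> row_ones (permute_rows \<sigma> A) i = k} =
      {i \<in> \<sigma> ` {..<n}. row_ones (permute_rows \<sigma> A) i = k}"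
    using permutes_image[OF assms] by simp
  also have "\<dots> = \<sigma> ` {i. i < n \<and> row_ones A i = k}"
    using row_ones_permute_rows[OF inj] by force
  finally show ?thesis
    using inj by (simp add: r_k_def card_image inj_on_subset)
qed

lemma row_equiv_invariants:
  assumes "(A, B) \<in> row_equiv n"
  shows "card B = card A" "psi n k B = psi n k A"
proof -
  obtain \<sigma> where \<sigma>: "\<sigma> permutes {..<n}" and B: "B = permute_rows \<sigma> A"
    using assms by (auto simp: row_equiv_iff)
  have inj: "inj \<sigma>" using \<sigma> by (rule permutes_inj)
  show "card B = card A"
    unfolding B using card_permute_rows[OF inj] .
  show "psi n k B = psi n k A"
    unfolding B psi_def c_k_def r_k_permute_rows[OF \<sigma>] col_ones_permute_rows[OF inj] ..
qed

lemma sum_eq_sum_quotient: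
  fixes f :: "'a \<Rightarrow> 'b::comm_semiring_1"
  assumes R: "equiv X R" and "finite X" and f: "\<And>C x. C \<in> X // R \<Longrightarrow> x \<in> C \<Longrightarrow> f x = g C"
  shows "(\<Sum>x\<in>X. f x) = (\<Sum>C\<in>X // R. of_nat (card C) * g C)"
proof -
  have "finite C" if "C \<in> X // R" for C
    using in_quotient_imp_subset[OF R that] \<open>finite X\<close> by (rule finite_subset)
  moreover have "\<forall>C\<in>X // R. \<forall>C'\<in>X // R. C \<noteq> C' \<longrightarrow> C \<inter> C' = {}"
    using quotient_disj[OF R] by blast
  ultimately have "(\<Sum>x\<in>\<Union>(X // R). f x) = (\<Sum>C\<in>X // R. \<Sum>x\<in>C. f x)"
    by (simp add: sum.Union_disjoint)
  also have "\<dots> = (\<Sum>C\<in>X // R. of_nat (card C) * g C)"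
    using f by (intro sum.cong refl) simp
  finally show ?thesis
    unfolding Union_quotient[OF R] .
qed

lemma rep_in_class: "C \<in> classes n \<Longrightarrow> rep C \<in> C"
proof -
  assume "C \<in> classes n"
  then have "C \<noteq> {}"
    unfolding classes_def by (rule in_quotient_imp_non_empty[OF equiv_row_equiv])
  then show ?thesis
    unfolding rep_def by (simp add: some_in_eq)
qed

lemma finite_classes: "finite (classes n)"
  unfolding classes_def
  by (rule finite_quotient[OF finite_binmat]) (auto simp: row_equiv_def)

lemma sum_binmat_card_ge_2_eq_sum_classes:
  assumes n: "n \<ge> 2"
  shows "(\<Sum>M\<in>{M \<in> binmat n. 2 \<le> card M}. (-1) ^ card M * int (completion_count n M)) =
    (\<Sum>C \<in> {C \<in> classes n. eps (rep C) \<ge> 2}.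
       (-1) ^ eps (rep C) * int (card C) *
       (\<Prod>i = 0..n - 2. int (fact (n - i)) ^ psi n i (rep C)))"
proof -
  define summand where "summand M = (-1) ^ card M * (\<Prod>i = 0..n - 2. int (fact (n - i)) ^ psi n i M)"
    for M
  have "(\<Sum>M\<in>{M \<in> binmat n. 2 \<le> card M}. (-1) ^ card M * int (completion_count n M)) =
      (\<Sum>M\<in>{M \<in> binmat n. 2 \<le> card M}. summand M)"
    by (intro sum.cong refl) (simp add: summand_def completion_count_eq_prod_psi[OF n] of_nat_prod)
  also have "\<dots> = (\<Sum>M\<in>binmat n. if 2 \<le> card M then summand M else 0)"
    by (simp add: sum.inter_filter finite_binmat)
  also have "\<dots> = (\<Sum>C\<in>classes n. int (card C) * (if 2 \<le> card (rep C) then summand (rep C) else 0))"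
    unfolding classes_def
  proof (rule sum_eq_sum_quotient[OF equiv_row_equiv finite_binmat])
    fix C M assume "C \<in> binmat n // row_equiv n" "M \<in> C"
    then have "(rep C, M) \<in> row_equiv n"
      using rep_in_class in_quotient_imp_in_rel[OF equiv_row_equiv] by (simp add: classes_def)
    then show "(if 2 \<le> card M then summand M else 0) = (if 2 \<le> card (rep C) then summand (rep C) else 0)"
      by (simp add: summand_def row_equiv_invariants)
  qed
  also have "\<dots> = (\<Sum>C\<in>classes n. if 2 \<le> eps (rep C) then int (card C) * summand (rep C) else 0)"
    by (intro sum.cong refl) (simp add: eps_def)
  also have "\<dots> = (\<Sum>C \<in> {C \<in> classes n. eps (rep C) \<ge> 2}. int (card C) * summand (rep C))"
    using finite_classes by (simp add: sum.inter_filter)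
  also have "\<dots> = (\<Sum>C \<in> {C \<in> classes n. eps (rep C) \<ge> 2}.
       (-1) ^ eps (rep C) * int (card C) *
       (\<Prod>i = 0..n - 2. int (fact (n - i)) ^ psi n i (rep C)))"
    unfolding summand_def eps_def by (intro sum.cong refl) (simp add: mult.left_commute)
  finally show ?thesis .
qed

theorem mainTheorem5:
  fixes n :: nat and A :: "(nat \<times> nat) set"
  assumes "n \<ge> 2" and "A \<in> spm n"
  shows "int (card {B \<in> spm n. disjoint_mat A B}) =
    (\<Sum>C \<in> {C \<in> classes n. eps (rep C) \<ge> 2}.
       (-1) ^ eps (rep C) * int (card C) *
       (\<Prod>i = 0..n - 2. int (fact (n - i)) ^ psi n i (rep C)))"
proof -
  let ?summand = "\<lambda>M. (-1) ^ card M * int (completion_count n M)"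
  have "binmat n = {M \<in> binmat n. 2 \<le> card M} \<union> {M \<in> binmat n. card M < 2}"
    by auto
  then have "(\<Sum>M\<in>binmat n. ?summand M) =
      (\<Sum>M\<in>{M \<in> binmat n. 2 \<le> card M}. ?summand M) + (\<Sum>M\<in>{M \<in> binmat n. card M < 2}. ?summand M)"
    using finite_binmat[of n] by (metis (no_types, lifting) sum_Un_eq disjoint_iff mem_Collect_eq not_le)
  also have "(\<Sum>M\<in>{M \<in> binmat n. card M < 2}. ?summand M) = 0"
    using sum_binmat_card_less_2 assms(1) by simp
  finally show ?thesis
    using int_card_spm_disjoint[OF assms(2)] sum_binmat_card_ge_2_eq_sum_classes[OF assms(1)] by simp
qed

end
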